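(* Let $\Phi$ be an $L$-layer ReLU network with weights $W^{(i)}\in\mathbb R^{N_{i-1}\times N_i}$, data $X\in\mathbb R^{m\times N_0}$, alphabet $\mathcal A=\mathcal A_\infty^\delta$, $p\in\mathbb N$, and $2\le i\le L$. Suppose the first $i-1$ layers have been quantized (by the same algorithm), and consider the quantization of layer $i$; probabilities below are conditional on the first $i-1$ layers. (a) If layer $i$ is quantized by Algorithm 1 (perfect data alignment), then with probability at least $1-\sqrt2\,mN_i/N_{i-1}^p$, $$\max_{1\le j\le N_i}\|X^{(i-1)}W^{(i)}_j-\widetilde X^{(i-1)}Q^{(i)}_j\|_2\le \delta\sqrt{2\pi pm\log N_{i-1}}\max_{1\le j\le N_{i-1}}\|X^{(i-1)}_j\|_2+\delta\sqrt{2\pi pm\log N_{i-1}}\max_{1\le j\le N_{i-1}}\|X^{(i-2)}W^{(i-1)}_j-\widetilde X^{(i-2)}Q^{(i-1)}_j\|_2.$$ (b) If layer $i$ is quantized by Algorithm 2 (order-$r$ data alignment), then with probability at least $1-\sqrt2\,mN_i/N_{i-1}^p$, $$\max_{1\le j\le N_i}\|X^{(i-1)}W^{(i)}_j-\widetilde X^{(i-1)}Q^{(i)}_j\|_2\le \delta\sqrt{2\pi pm\log N_{i-1}}\max_{j}\|X^{(i-1)}_j\|_2+\Bigl(N_{i-1}\|W^{(i)}\|_{\max}\|P^{(i-1)}\|_2^{r-1}+\delta\sqrt{2\pi pm\log N_{i-1}}\Bigr)\max_{1\le j\le N_{i-1}}\|X^{(i-2)}W^{(i-1)}_j-\widetilde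 X^{(i-2)}Q^{(i-1)}_j\|_2,$$ where $P^{(i-1)}:=P_{\widetilde X^{(i-1)\perp}_{N_{i-1}}}\cdots P_{\widetilde X^{(i-1)\perp}_{1}}$.
   Context: $\rho(x)=\max\{0,x\}$ acts entrywise. For data $X\in\mathbb R^{m\times N_0}$ (data points as rows): $X^{(0)}=X$, $X^{(i)}=\rho(X^{(i-1)}W^{(i)})$; for quantized weights $Q^{(i)}$: $\widetilde X^{(0)}=X$, $\widetilde X^{(i)}=\rho(\widetilde X^{(i-1)}Q^{(i)})$. $A_j$ is the $j$-th column of $A$, $\|A\|_{\max}=\max_{k,l}|A_{kl}|$; columns of $\widetilde X^{(i)}$ are assumed nonzero; $P_{z^\perp}=I-zz^\top/\|z\|_2^2$. $\mathcal A_\infty^\delta=\{k\delta:k\in\mathbb Z\}$; $\mathcal Q_{\mathrm{StocQ}}(z)$ equals $\lfloor z/\delta\rfloor\delta$ with probability $1-z/\delta+\lfloor z/\delta\rfloor$ and $(\lfloor z/\delta\rfloor+1)\delta$ otherwise, with fresh independent randomness at each call. Phase II for a vector $\widetilde w\in\mathbb R^{N}$ and data $\widetilde Y\in\mathbb R^{m\times N}$: $\widetilde u_0=0$, $\widetilde q_t=\mathcal Q_{\mathrm{StocQ}}(\widetilde w_t+\langle\widetilde Y_t,\widetilde u_{t-1}\rangle/\|\widetilde Y_t\|_2^2)$, $\widetilde u_t=\widetilde u_{t-1}+(\widetilde w_t-\widetilde q_t)\widetilde Y_t$, $t=1,\dots,N$. Perfect alignment: given $Y,\widetilde Y,w$,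 $\widetilde w$ is a minimizer of $\|z\|_\infty$ subject to $\widetilde Yz=Yw$ (assumed feasible). Order-$r$ alignment: $\hat u_0=0$; for $t=1,\dots,N$, $\widetilde w_t=\langle\widetilde Y_t,\hat u_{t-1}+w_tY_t\rangle/\|\widetilde Y_t\|_2^2$, $\hat u_t=\hat u_{t-1}+w_tY_t-\widetilde w_t\widetilde Y_t$; for $t=N+1,\dots,rN$ (indices of $w,\widetilde w,Y,\widetilde Y$ mod $N$), $\hat v_{t-1}=\hat u_{t-1}-w_tY_t+\widetilde w_t\widetilde Y_t$, $\widetilde w_t\leftarrow\langle\widetilde Y_t,\hat v_{t-1}+w_tY_t\rangle/\|\widetilde Y_t\|_2^2$, $\hat u_t=\hat v_{t-1}+w_tY_t-\widetilde w_t\widetilde Y_t$. Algorithm 1: for $i=1,\dots,L$, with $Y=X^{(i-1)},\widetilde Y=\widetilde X^{(i-1)}$, for each column $w=W^{(i)}_j$ compute $\widetilde w$ by perfect alignment, run Phase II on $\widetilde w$ with data $\widetilde Y$, and set $Q^{(i)}_j=\widetilde q$. Algorithm 2: the same with order-$r$ alignment in place of perfect alignment. *)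

theory Defs
  imports "HOL-Probability.Probability"
begin

text \<open>Vectors and matrices are represented as functions on natural-number indices
  (0-based); the relevant dimensions are always passed explicitly and only
  entries with indices below these dimensions are ever used.\<close>

type_synonym vec = "nat \<Rightarrow> real"
type_synonym mat = "nat \<Rightarrow> nat \<Rightarrow> real"

definition relu :: "real \<Rightarrow> real" where
  "relu x = max 0 x"

definition col :: "mat \<Rightarrow> nat \<Rightarrow> vec" where
  "col A j = (\<lambda>a. A a j)"

definition inner_m :: "nat \<Rightarrow> vec \<Rightarrow> vec \<Rightarrow> real" where
  "inner_m m x y = (\<Sum>a<m. x a * y a)"

definition norm_m :: "nat \<Rightarrow> vec \<Rightarrow> real" where
  "norm_m m x = sqrt (\<Sum>a<m. (x a)^2)"

definition matvec :: "mat \<Rightarrow> vec \<Rightarrow> nat \<Rightarrow> vec" where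
  "matvec A z n = (\<lambda>a. \<Sum>k<n. A a k * z k)"

fun net :: "mat \<Rightarrow> (nat \<Rightarrow> mat) \<Rightarrow> (nat \<Rightarrow> nat) \<Rightarrow> nat \<Rightarrow> mat" where
  "net X W N 0 = X"
| "net X W N (Suc i) = (\<lambda>a b. relu (\<Sum>k<N i. net X W N i a k * W (Suc i) k b))"

definition stocq :: "real \<Rightarrow> real \<Rightarrow> real pmf" where
  "stocq \<delta> z = map_pmf (\<lambda>b. if b then (of_int \<lfloor>z/\<delta>\<rfloor> + 1) * \<delta> else of_int \<lfloor>z/\<delta>\<rfloor> * \<delta>)
                       (bernoulli_pmf (z/\<delta> - of_int \<lfloor>z/\<delta>\<rfloor>))"

fun phase2_state :: "real \<Rightarrow> vec \<Rightarrow> mat \<Rightarrow> nat \<Rightarrow> nat \<Rightarrow> (vec \<times> vec) pmf" where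
  "phase2_state \<delta> w Yt m 0 = return_pmf (\<lambda>_. 0, \<lambda>_. 0)"
| "phase2_state \<delta> w Yt m (Suc t) =
     bind_pmf (phase2_state \<delta> w Yt m t) (\<lambda>(q, u).
       bind_pmf (stocq \<delta> (w t + inner_m m (col Yt t) u / (norm_m m (col Yt t))^2)) (\<lambda>qt.
         return_pmf (q(t := qt), \<lambda>a. u a + (w t - qt) * Yt a t)))"

definition phase2 :: "real \<Rightarrow> vec \<Rightarrow> mat \<Rightarrow> nat \<Rightarrow> nat \<Rightarrow> vec pmf" where
  "phase2 \<delta> w Yt m n = map_pmf fst (phase2_state \<delta> w Yt m n)"

definition linf :: "nat \<Rightarrow> vec \<Rightarrow> real" where
  "linf n z = (MAX k\<in>{..<n}. \<bar>z k\<bar>)"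

definition perfect_align :: "nat \<Rightarrow> nat \<Rightarrow> mat \<Rightarrow> mat \<Rightarrow> vec \<Rightarrow> vec \<Rightarrow> bool" where
  "perfect_align m n Y Yt w z \<longleftrightarrow>
     (\<forall>a<m. matvec Yt z n a = matvec Y w n a) \<and>
     (\<forall>z'. (\<forall>a<m. matvec Yt z' n a = matvec Y w n a) \<longrightarrow> linf n z \<le> linf n z')"

definition ord_step :: "nat \<Rightarrow> nat \<Rightarrow> mat \<Rightarrow> mat \<Rightarrow> vec \<Rightarrow> nat \<Rightarrow> vec \<times> vec \<Rightarrow> vec \<times> vec" where
  "ord_step m n Y Yt w t st =
     (let (wt, u) = st; s = t mod n in
      if t < n then
        (let c = inner_m m (col Yt s) (\<lambda>a. u a + w s * Y a s) / (norm_m m (col Yt s))^2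
         in (wt(s := c), \<lambda>a. u a + w s * Y a s - c * Yt a s))
      else
        (let v = (\<lambda>a. u a - w s * Y a s + wt s * Yt a s);
             c = inner_m m (col Yt s) (\<lambda>a. v a + w s * Y a s) / (norm_m m (col Yt s))^2
         in (wt(s := c), \<lambda>a. v a + w s * Y a s - c * Yt a s)))"

fun ord_state :: "nat \<Rightarrow> nat \<Rightarrow> mat \<Rightarrow> mat \<Rightarrow> vec \<Rightarrow> nat \<Rightarrow> vec \<times> vec" where
  "ord_state m n Y Yt w 0 = (\<lambda>_. 0, \<lambda>_. 0)"
| "ord_state m n Y Yt w (Suc t) = ord_step m n Y Yt w t (ord_state m n Y Yt w t)"

definition order_r_align :: "nat \<Rightarrow> nat \<Rightarrow> nat \<Rightarrow> mat \<Rightarrow> mat \<Rightarrow> vec \<Rightarrow> vec" where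
  "order_r_align r m n Y Yt w = fst (ord_state m n Y Yt w (r * n))"

fun cols_pmf :: "(nat \<Rightarrow> vec pmf) \<Rightarrow> nat \<Rightarrow> (nat \<Rightarrow> vec) pmf" where
  "cols_pmf f 0 = return_pmf (\<lambda>_ _. 0)"
| "cols_pmf f (Suc n) = bind_pmf (cols_pmf f n) (\<lambda>C. bind_pmf (f n) (\<lambda>c. return_pmf (C(n := c))))"

definition mat_pmf :: "(nat \<Rightarrow> vec pmf) \<Rightarrow> nat \<Rightarrow> mat pmf" where
  "mat_pmf f n = map_pmf (\<lambda>C k j. C j k) (cols_pmf f n)"

definition col_err :: "nat \<Rightarrow> nat \<Rightarrow> mat \<Rightarrow> mat \<Rightarrow> mat \<Rightarrow> mat \<Rightarrow> nat \<Rightarrow> real" where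
  "col_err m n Y W Yt Q j = norm_m m (\<lambda>a. matvec Y (col W j) n a - matvec Yt (col Q j) n a)"

definition max_norm :: "nat \<Rightarrow> nat \<Rightarrow> mat \<Rightarrow> real" where
  "max_norm n1 n2 A = (MAX (k, j)\<in>{..<n1} \<times> {..<n2}. \<bar>A k j\<bar>)"

definition idm :: mat where
  "idm = (\<lambda>a b. if a = b then 1 else 0)"

definition matmul :: "nat \<Rightarrow> mat \<Rightarrow> mat \<Rightarrow> mat" where
  "matmul m A B = (\<lambda>a b. \<Sum>k<m. A a k * B k b)"

definition proj_perp :: "nat \<Rightarrow> vec \<Rightarrow> mat" where
  "proj_perp m z = (\<lambda>a b. idm a b - z a * z b / (norm_m m z)^2)"

fun proj_prod :: "nat \<Rightarrow> mat \<Rightarrow> nat \<Rightarrow> mat" where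
  "proj_prod m Yt 0 = idm"
| "proj_prod m Yt (Suc n) = matmul m (proj_perp m (col Yt n)) (proj_prod m Yt n)"

definition op_norm :: "nat \<Rightarrow> mat \<Rightarrow> real" where
  "op_norm m A = Sup {norm_m m (matvec A x m) | x. norm_m m x \<le> 1}"

end

theory Submission
  imports Defs
begin

text \<open>Phase II rounds, at step \<open>t\<close>, the unbiased target
  \<open>wt\<^sub>t + \<langle>Yt\<^sub>t, u\<rangle>/\<Vert>Yt\<^sub>t\<Vert>\<^sup>2\<close>, so the new residual is the projection of the old one onto
  \<open>Yt\<^sub>t\<^sup>\<perp>\<close> plus \<open>Yt\<^sub>t\<close> times a centred error supported on an interval of length \<open>\<delta>\<close>.
  Hoeffding's lemma and the identity \<open>\<Vert>P s\<Vert>\<^sup>2 = \<Vert>s\<Vert>\<^sup>2 - \<langle>s,y\<rangle>\<^sup>2/\<Vert>y\<Vert>\<^sup>2\<close> show by induction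
  that the final residual is subgaussian with variance proxy \<open>\<delta>\<^sup>2 max\<^sub>t \<Vert>Yt\<^sub>t\<Vert>\<^sup>2/4\<close>;
  a Chernoff bound for each of the \<open>m\<close> coordinates and a union bound over the
  \<open>N\<^sub>i\<close> independently quantized columns give the probability estimate.

  The alignment error \<open>Y w - Yt wt\<close> is zero for perfect alignment. For order-\<open>r\<close>
  alignment, after the first pass it is at most \<open>\<Sum>\<^sub>t |w\<^sub>t| \<Vert>Y\<^sub>t - Yt\<^sub>t\<Vert>\<close>, and every further
  pass applies the product \<open>P\<close> of the projections to it. Finally, ReLU is
  1-Lipschitz, so the column distances \<open>\<Vert>Y\<^sub>t - Yt\<^sub>t\<Vert>\<close>, and hence \<open>\<Vert>Yt\<^sub>t\<Vert> - \<Vert>Y\<^sub>t\<Vert>\<close>, are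
  bounded by the errors of the previous layer.\<close>

section \<open>Euclidean norm and matrices\<close>

lemma norm_m_eq_L2_set: "norm_m m x = L2_set x {..<m}"
  by (simp add: L2_set_def norm_m_def)

lemma norm_m_nonneg: "norm_m m x \<ge> 0"
  by (simp add: norm_m_def sum_nonneg)

lemma power2_norm_m: "(norm_m m x)^2 = (\<Sum>a<m. (x a)^2)"
  by (simp add: norm_m_def sum_nonneg)

lemma norm_m_triangle: "norm_m m (\<lambda>a. x a + y a) \<le> norm_m m x + norm_m m y"
  unfolding norm_m_eq_L2_set by (rule L2_set_triangle_ineq)

lemma norm_m_cong: "(\<And>a. a < m \<Longrightarrow> x a = y a) \<Longrightarrow> norm_m m x = norm_m m y"
  unfolding norm_m_def by (metis (mono_tags) lessThan_iff sum.cong)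

lemma norm_m_minus_commute: "norm_m m (\<lambda>a. x a - y a) = norm_m m (\<lambda>a. y a - x a)"
  unfolding norm_m_def by (simp add: power2_commute)

lemma norm_m_scale: "norm_m m (\<lambda>a. c * x a) = \<bar>c\<bar> * norm_m m x"
proof -
  have "(\<Sum>a<m. (c * x a)^2) = c^2 * (\<Sum>a<m. (x a)^2)"
    by (simp add: power_mult_distrib sum_distrib_left)
  thus ?thesis unfolding norm_m_def by (simp add: real_sqrt_mult)
qed

lemma abs_le_norm_m: "b < m \<Longrightarrow> \<bar>x b\<bar> \<le> norm_m m x"
proof -
  assume "b < m"
  hence "(x b)^2 \<le> (\<Sum>a<m. (x a)^2)" by (intro member_le_sum) auto
  hence "sqrt ((x b)^2) \<le> norm_m m x" unfolding norm_m_def by (rule real_sqrt_le_mono)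
  thus ?thesis by simp
qed

lemma norm_m_le_sqrt_mult:
  assumes "\<And>a. a < m \<Longrightarrow> \<bar>x a\<bar> \<le> \<alpha>" and "\<alpha> \<ge> 0"
  shows "norm_m m x \<le> sqrt (real m) * \<alpha>"
proof -
  have "(\<Sum>a<m. (x a)^2) \<le> (\<Sum>a<m. \<alpha>^2)"
  proof (rule sum_mono)
    fix a assume "a \<in> {..<m}"
    hence "\<bar>x a\<bar>^2 \<le> \<alpha>^2" using assms by (intro power_mono) auto
    thus "(x a)^2 \<le> \<alpha>^2" by simp
  qed
  hence "norm_m m x \<le> sqrt (real m * \<alpha>^2)" unfolding norm_m_def by simp
  also have "\<dots> = sqrt (real m) * \<alpha>" using assms(2) by (simp add: real_sqrt_mult)
  finally show ?thesis .
qed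

lemma norm_m_reject_power2:
  assumes "norm_m m y \<noteq> 0"
  shows "(norm_m m (\<lambda>a. s a - inner_m m s y * y a / (norm_m m y)^2))^2
       = (norm_m m s)^2 - (inner_m m s y)^2 / (norm_m m y)^2"
proof -
  define nr where "nr = (norm_m m y)^2"
  define b where "b = inner_m m s y"
  have nr: "nr > 0" using assms norm_m_nonneg[of m y] unfolding nr_def by simp
  have "(norm_m m (\<lambda>a. s a - b * y a / nr))^2
      = (\<Sum>a<m. (s a)^2 - 2 * (b/nr) * (s a * y a) + (b/nr)^2 * (y a)^2)"
    unfolding power2_norm_m using nr
    by (intro sum.cong refl) (simp add: power2_diff field_simps power2_eq_square)
  also have "\<dots> = (norm_m m s)^2 - 2 * (b/nr) * b + (b/nr)^2 * nr"
    unfolding power2_norm_m b_def inner_m_def nr_def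
    by (simp add: sum.distrib sum_subtractf sum_distrib_left)
  also have "\<dots> = (norm_m m s)^2 - b^2/nr"
    using nr by (simp add: field_simps power2_eq_square)
  finally show ?thesis unfolding b_def nr_def .
qed

lemma norm_m_reject_le:
  assumes "norm_m m y \<noteq> 0"
  shows "norm_m m (\<lambda>a. z a - inner_m m z y * y a / (norm_m m y)^2) \<le> norm_m m z"
proof (rule power2_le_imp_le[OF _ norm_m_nonneg])
  show "(norm_m m (\<lambda>a. z a - inner_m m z y * y a / (norm_m m y)^2))^2 \<le> (norm_m m z)^2"
    unfolding norm_m_reject_power2[OF assms] by simp
qed

lemma matvec_cong: "(\<And>b. b < m \<Longrightarrow> x b = x' b) \<Longrightarrow> matvec A x m a = matvec A x' m a"
  unfolding matvec_def by (intro sum.cong) auto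

lemma inner_m_cong: "(\<And>b. b < m \<Longrightarrow> x b = x' b) \<Longrightarrow> inner_m m y x = inner_m m y x'"
  unfolding inner_m_def by (intro sum.cong) auto

lemma matvec_idm: "a < m \<Longrightarrow> matvec idm x m a = x a"
proof -
  assume "a < m"
  moreover have "matvec idm x m a = (\<Sum>k<m. if k = a then x a else 0)"
    unfolding matvec_def idm_def by (intro sum.cong) auto
  ultimately show ?thesis by (simp add: sum.delta)
qed

lemma matvec_proj_perp:
  "a < m \<Longrightarrow> matvec (proj_perp m y) x m a = x a - y a * inner_m m y x / (norm_m m y)^2"
proof -
  assume "a < m"
  moreover have "matvec (proj_perp m y) x m a
      = matvec idm x m a - y a / (norm_m m y)^2 * (\<Sum>b<m. y b * x b)"
    unfolding matvec_def proj_perp_def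
    by (simp add: algebra_simps sum_subtractf sum_distrib_left sum_divide_distrib)
  ultimately show ?thesis by (simp add: matvec_idm inner_m_def)
qed

lemma matvec_matmul: "matvec (matmul m A B) x m a = matvec A (\<lambda>b. matvec B x m b) m a"
  unfolding matvec_def matmul_def
  by (simp add: sum_distrib_left sum_distrib_right mult.assoc) (rule sum.swap)

lemma norm_matvec_le: "norm_m m (matvec A x m) \<le> (\<Sum>a<m. \<Sum>b<m. \<bar>A a b\<bar>) * norm_m m x"
proof -
  have "norm_m m (matvec A x m) \<le> (\<Sum>a<m. \<bar>matvec A x m a\<bar>)"
    unfolding norm_m_eq_L2_set by (rule L2_set_le_sum_abs)
  also have "\<dots> \<le> (\<Sum>a<m. (\<Sum>b<m. \<bar>A a b\<bar>) * norm_m m x)"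
  proof (rule sum_mono)
    fix a
    have "\<bar>matvec A x m a\<bar> \<le> (\<Sum>b<m. \<bar>A a b * x b\<bar>)"
      unfolding matvec_def by (rule sum_abs)
    also have "\<dots> \<le> (\<Sum>b<m. \<bar>A a b\<bar> * norm_m m x)"
      by (intro sum_mono) (auto simp: abs_mult intro: mult_left_mono abs_le_norm_m)
    finally show "\<bar>matvec A x m a\<bar> \<le> (\<Sum>b<m. \<bar>A a b\<bar>) * norm_m m x"
      by (simp add: sum_distrib_right)
  qed
  finally show ?thesis by (simp add: sum_distrib_right)
qed

lemma op_norm_nonneg: "0 \<le> op_norm m A"
  and norm_matvec_le_op_norm: "norm_m m (matvec A x m) \<le> op_norm m A * norm_m m x"
proof -
  define S where "S = {norm_m m (matvec A x m) | x. norm_m m x \<le> 1}"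
  define B where "B = (\<Sum>a<m. \<Sum>b<m. \<bar>A a b\<bar>)"
  have "B \<ge> 0" unfolding B_def by (simp add: sum_nonneg)
  have bdd: "bdd_above S"
  proof (rule bdd_aboveI)
    fix t assume "t \<in> S"
    then obtain x where "t = norm_m m (matvec A x m)" "norm_m m x \<le> 1" unfolding S_def by auto
    thus "t \<le> B" using norm_matvec_le[of m A x] \<open>B \<ge> 0\<close> unfolding B_def[symmetric]
      by (smt (verit) mult_left_le)
  qed
  have zero: "matvec A (\<lambda>_. 0) m = (\<lambda>_. 0)" by (simp add: matvec_def)
  have "0 \<in> S" unfolding S_def using zero by (auto simp: norm_m_def intro!: exI[of _ "\<lambda>_. 0"])
  thus "0 \<le> op_norm m A"
    unfolding op_norm_def S_def[symmetric] using bdd by (meson cSup_upper2 order_refl)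
  show "norm_m m (matvec A x m) \<le> op_norm m A * norm_m m x"
  proof (cases "norm_m m x = 0")
    case True
    have "\<And>b. b < m \<Longrightarrow> x b = 0" using abs_le_norm_m[of _ m x] True by fastforce
    hence "matvec A x m = (\<lambda>_. 0)" using zero by (metis matvec_cong)
    thus ?thesis using True by (simp add: norm_m_def)
  next
    case False
    define nx where "nx = norm_m m x"
    have nx: "nx > 0" using False norm_m_nonneg[of m x] nx_def by simp
    define y where "y = (\<lambda>b. (1/nx) * x b)"
    have "norm_m m y = 1" unfolding y_def norm_m_scale using nx nx_def by simp
    hence "norm_m m (matvec A y m) \<in> S" unfolding S_def by auto
    hence "norm_m m (matvec A y m) \<le> op_norm m A"
      unfolding op_norm_def S_def[symmetric] using bdd by (rule cSup_upper)
    moreover have "matvec A y m = (\<lambda>a. (1/nx) * matvec A x m a)"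
      unfolding y_def matvec_def by (simp add: sum_distrib_left algebra_simps)
    hence "norm_m m (matvec A y m) = (1/nx) * norm_m m (matvec A x m)"
      using nx by (simp only: norm_m_scale abs_of_pos zero_less_divide_1_iff)
    ultimately have "(1/nx) * norm_m m (matvec A x m) \<le> op_norm m A" by simp
    thus ?thesis using nx unfolding nx_def[symmetric] by (simp add: field_simps)
  qed
qed

section \<open>Stochastic rounding and Phase II\<close>

lemma set_pmf_stocq:
  "q \<in> set_pmf (stocq \<delta> z) \<Longrightarrow> q = (of_int \<lfloor>z/\<delta>\<rfloor> + 1) * \<delta> \<or> q = of_int \<lfloor>z/\<delta>\<rfloor> * \<delta>"
  unfolding stocq_def by (auto split: if_splits)

lemma finite_set_pmf_stocq: "finite (set_pmf (stocq \<delta> z))"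
  by (rule finite_subset[of _ "{(of_int \<lfloor>z/\<delta>\<rfloor> + 1) * \<delta>, of_int \<lfloor>z/\<delta>\<rfloor> * \<delta>}"])
     (use set_pmf_stocq in blast, simp)

lemma expectation_stocq:
  assumes "\<delta> > 0"
  shows "measure_pmf.expectation (stocq \<delta> z) (\<lambda>q. q) = z"
proof -
  define \<theta> where "\<theta> = z/\<delta> - of_int \<lfloor>z/\<delta>\<rfloor>"
  have "0 \<le> \<theta>" "\<theta> \<le> 1" unfolding \<theta>_def by linarith+
  thus ?thesis
    unfolding stocq_def integral_map_pmf
    using assms by (subst integral_bernoulli_pmf) (auto simp: \<theta>_def[symmetric] field_simps, simp add: \<theta>_def field_simps)
qed

lemma pmf_hoeffding_mgf_le:
  fixes g :: "real \<Rightarrow> real"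
  assumes "l > 0" and "\<And>q. q \<in> set_pmf p \<Longrightarrow> g q \<in> {a..b}"
    and "measure_pmf.expectation p g = 0"
  shows "(\<integral>\<^sup>+q. ennreal (exp (l * g q)) \<partial>measure_pmf p) \<le> ennreal (exp (l^2 * (b-a)^2/8))"
proof -
  interpret interval_bounded_random_variable "measure_pmf p" g a b
    by unfold_locales (auto simp: AE_measure_pmf_iff dest: assms(2))
  show ?thesis using Hoeffdings_lemma_nn_integral_0[OF assms(1) assms(3)] by simp
qed

lemma stocq_mgf_le:
  assumes "\<delta> > 0"
  shows "(\<integral>\<^sup>+q. ennreal (exp (l * (z - q))) \<partial>measure_pmf (stocq \<delta> z)) \<le> ennreal (exp (l^2 * \<delta>^2/8))"
proof -
  define f where "f = real_of_int \<lfloor>z/\<delta>\<rfloor>"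
  have "f \<le> z/\<delta>" "z/\<delta> \<le> f + 1" unfolding f_def by linarith+
  hence fl: "f * \<delta> \<le> z" "z \<le> (f+1) * \<delta>" using assms by (auto simp: field_simps)
  have two_values: "q = (f + 1) * \<delta> \<or> q = f * \<delta>" if "q \<in> set_pmf (stocq \<delta> z)" for q
    using set_pmf_stocq[OF that] unfolding f_def .
  have int: "integrable (measure_pmf (stocq \<delta> z)) (\<lambda>q. q)"
    by (rule integrable_measure_pmf_finite[OF finite_set_pmf_stocq])
  have centred: "measure_pmf.expectation (stocq \<delta> z) (\<lambda>q. z - q) = 0"
    "measure_pmf.expectation (stocq \<delta> z) (\<lambda>q. q - z) = 0"
    using expectation_stocq[OF assms, of z] int by (simp_all add: Bochner_Integration.integral_diff)
  consider "l > 0" | "l < 0" | "l = 0" by linarith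
  then show ?thesis
  proof cases
    case 1
    have "(\<integral>\<^sup>+q. ennreal (exp (l * (z - q))) \<partial>measure_pmf (stocq \<delta> z))
        \<le> ennreal (exp (l^2 * ((z - f*\<delta>) - (z - (f+1)*\<delta>))^2/8))"
      by (rule pmf_hoeffding_mgf_le[OF 1 _ centred(1)]) (use two_values fl in fastforce)
    thus ?thesis by (simp add: algebra_simps)
  next
    case 2
    have "(\<integral>\<^sup>+q. ennreal (exp ((-l) * (q - z))) \<partial>measure_pmf (stocq \<delta> z))
        \<le> ennreal (exp ((-l)^2 * (((f+1)*\<delta> - z) - (f*\<delta> - z))^2/8))"
      by (rule pmf_hoeffding_mgf_le[OF _ _ centred(2)]) (use two_values fl 2 in fastforce)+
    thus ?thesis by (simp add: algebra_simps)
  next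
    case 3
    thus ?thesis by (simp add: measure_pmf.emeasure_space_1)
  qed
qed

lemma phase2_state_residual:
  "st \<in> set_pmf (phase2_state \<delta> w Yt m n) \<Longrightarrow> snd st a = (\<Sum>k<n. (w k - fst st k) * Yt a k)"
proof (induction n arbitrary: st)
  case (Suc t)
  from Suc.prems obtain x qt where x: "x \<in> set_pmf (phase2_state \<delta> w Yt m t)"
    and st: "st = ((fst x)(t := qt), \<lambda>a. snd x a + (w t - qt) * Yt a t)"
    by (auto split: prod.splits)
  show ?case using Suc.IH[OF x] by (simp add: st sum.lessThan_Suc)
qed simp

text \<open>One Phase II step: the correction term \<open>\<langle>y,u\<rangle>/\<Vert>y\<Vert>\<^sup>2\<close> inside the rounding makes
  the new residual equal \<open>P\<^sub>y\<^sub>\<perp> u\<close> plus \<open>y\<close> times a centred rounding error; hence testing it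
  against \<open>s\<close> splits into \<open>\<langle>P\<^sub>y\<^sub>\<perp> s, u\<rangle>\<close> and a subgaussian term.\<close>

lemma phase2_step_mgf_le:
  fixes s y u :: vec and wt :: real
  assumes "\<delta> > 0" and "norm_m m y \<noteq> 0"
  defines "b \<equiv> inner_m m s y"
  defines "Ps \<equiv> (\<lambda>a. s a - b * y a / (norm_m m y)^2)"
  shows "(\<integral>\<^sup>+qt. ennreal (exp (inner_m m s (\<lambda>a. u a + (wt - qt) * y a)))
            \<partial>measure_pmf (stocq \<delta> (wt + inner_m m y u / (norm_m m y)^2)))
         \<le> ennreal (exp (inner_m m Ps u)) * ennreal (exp (b^2 * \<delta>^2/8))"
proof -
  define z where "z = wt + inner_m m y u / (norm_m m y)^2"
  have split: "inner_m m s (\<lambda>a. u a + (wt - qt) * y a) = inner_m m Ps u + b * (z - qt)" for qt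
  proof -
    have "inner_m m s (\<lambda>a. u a + (wt - qt) * y a) = inner_m m s u + (wt - qt) * b"
      unfolding inner_m_def b_def
      by (simp add: algebra_simps sum.distrib sum_distrib_left sum_subtractf)
    moreover have "inner_m m Ps u = inner_m m s u - b * inner_m m y u / (norm_m m y)^2"
      unfolding inner_m_def Ps_def
      by (simp add: algebra_simps sum_subtractf sum_distrib_left sum_divide_distrib)
    ultimately show ?thesis unfolding z_def by (simp add: algebra_simps)
  qed
  have "(\<integral>\<^sup>+qt. ennreal (exp (inner_m m s (\<lambda>a. u a + (wt - qt) * y a))) \<partial>measure_pmf (stocq \<delta> z))
      = ennreal (exp (inner_m m Ps u)) * (\<integral>\<^sup>+qt. ennreal (exp (b * (z - qt))) \<partial>measure_pmf (stocq \<delta> z))"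
    by (simp add: split exp_add ennreal_mult' nn_integral_cmult)
  also have "\<dots> \<le> ennreal (exp (inner_m m Ps u)) * ennreal (exp (b^2 * \<delta>^2/8))"
    by (intro mult_left_mono stocq_mgf_le assms(1)) simp
  finally show ?thesis unfolding z_def .
qed

text \<open>Each step trades the Hoeffding factor \<open>exp (\<langle>s,y\<rangle>\<^sup>2 \<delta>\<^sup>2/8)\<close> for the decrease
  \<open>\<langle>s,y\<rangle>\<^sup>2/\<Vert>y\<Vert>\<^sup>2\<close> of \<open>\<Vert>s\<Vert>\<^sup>2\<close> under the projection; this is where \<open>\<delta>\<^sup>2 \<Vert>y\<Vert>\<^sup>2/4 \<le> K\<close> enters.\<close>

lemma phase2_state_mgf_le:
  fixes \<delta> K :: real and w s :: vec and Yt :: mat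
  assumes "\<delta> > 0" and "K \<ge> 0"
    and "\<forall>t<n. norm_m m (col Yt t) \<noteq> 0" and "\<forall>t<n. \<delta>^2 * (norm_m m (col Yt t))^2/4 \<le> K"
  shows "(\<integral>\<^sup>+st. ennreal (exp (inner_m m s (snd st))) \<partial>measure_pmf (phase2_state \<delta> w Yt m n))
     \<le> ennreal (exp (K * (norm_m m s)^2/2))"
  using assms(3,4)
proof (induction n arbitrary: s)
  case 0
  have "inner_m m s (\<lambda>_. 0) = 0" by (simp add: inner_m_def)
  thus ?case using assms by simp
next
  case (Suc t)
  define y where "y = col Yt t"
  define b where "b = inner_m m s y"
  define Ps where "Ps = (\<lambda>a. s a - b * y a / (norm_m m y)^2)"
  have y: "norm_m m y \<noteq> 0" using Suc.prems y_def by simp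
  have Kt: "\<delta>^2 * (norm_m m y)^2 / 4 \<le> K" using Suc.prems(2) y_def by auto
  have "(\<integral>\<^sup>+st. ennreal (exp (inner_m m s (snd st))) \<partial>measure_pmf (phase2_state \<delta> w Yt m (Suc t)))
     = (\<integral>\<^sup>+x. (\<integral>\<^sup>+qt. ennreal (exp (inner_m m s (\<lambda>a. snd x a + (w t - qt) * y a)))
            \<partial>measure_pmf (stocq \<delta> (w t + inner_m m y (snd x) / (norm_m m y)^2)))
          \<partial>measure_pmf (phase2_state \<delta> w Yt m t))"
    by (simp add: y_def col_def case_prod_beta)
  also have "\<dots> \<le> (\<integral>\<^sup>+x. ennreal (exp (inner_m m Ps (snd x))) * ennreal (exp (b^2 * \<delta>^2/8))
         \<partial>measure_pmf (phase2_state \<delta> w Yt m t))"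
    unfolding Ps_def b_def by (intro nn_integral_mono phase2_step_mgf_le assms(1) y)
  also have "\<dots> = (\<integral>\<^sup>+x. ennreal (exp (inner_m m Ps (snd x))) \<partial>measure_pmf (phase2_state \<delta> w Yt m t))
         * ennreal (exp (b^2 * \<delta>^2/8))"
    by (rule nn_integral_multc) simp
  also have "\<dots> \<le> ennreal (exp (K * (norm_m m Ps)^2/2)) * ennreal (exp (b^2 * \<delta>^2/8))"
    by (intro mult_right_mono Suc.IH) (use Suc.prems in auto)
  also have "\<dots> = ennreal (exp (K * (norm_m m Ps)^2/2 + b^2 * \<delta>^2/8))"
    by (simp add: exp_add ennreal_mult')
  also have "\<dots> \<le> ennreal (exp (K * (norm_m m s)^2/2))"
  proof (intro ennreal_leI exp_mono)
    have y2: "(norm_m m y)^2 > 0" using y norm_m_nonneg[of m y] by simp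
    have "b^2 * \<delta>^2/8 = (\<delta>^2 * (norm_m m y)^2 / 4) * (b^2 / (norm_m m y)^2) / 2"
      using y2 by (simp add: field_simps)
    also have "\<dots> \<le> K * (b^2 / (norm_m m y)^2) / 2"
      using Kt y2 by (intro divide_right_mono mult_right_mono) auto
    finally show "K * (norm_m m Ps)^2/2 + b^2 * \<delta>^2/8 \<le> K * (norm_m m s)^2/2"
      unfolding Ps_def b_def norm_m_reject_power2[OF y] by (simp add: algebra_simps diff_divide_distrib)
  qed
  finally show ?case .
qed

lemma phase2_state_tail_one_sided:
  fixes \<delta> K \<alpha> \<sigma> :: real
  assumes "\<delta> > 0" "K > 0" "\<alpha> \<ge> 0" "a < m" "\<sigma>^2 = 1"
    and "\<forall>t<n. norm_m m (col Yt t) \<noteq> 0" "\<forall>t<n. \<delta>^2 * (norm_m m (col Yt t))^2/4 \<le> K"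
  shows "measure_pmf.prob (phase2_state \<delta> w Yt m n) {st. \<alpha> \<le> \<sigma> * snd st a} \<le> exp (-(\<alpha>^2)/(2*K))"
proof -
  define M where "M = measure_pmf (phase2_state \<delta> w Yt m n)"
  define l where "l = \<alpha> / K"
  define s :: vec where "s = (\<lambda>b. if b = a then \<sigma> * l else 0)"
  have inner_s: "inner_m m s u = \<sigma> * l * u a" for u
  proof -
    have "inner_m m s u = (\<Sum>b<m. if b = a then \<sigma> * l * u a else 0)"
      unfolding inner_m_def s_def by (intro sum.cong refl) auto
    thus ?thesis using assms(4) by (simp add: sum.delta)
  qed
  have norm_s: "(norm_m m s)^2 = l^2"
  proof -
    have "(norm_m m s)^2 = (\<Sum>b<m. if b = a then (\<sigma> * l)^2 else 0)"
      unfolding power2_norm_m s_def by (intro sum.cong refl) auto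
    thus ?thesis using assms(4,5) by (simp add: sum.delta power_mult_distrib)
  qed
  have l: "l \<ge> 0" unfolding l_def using assms by simp
  have "emeasure M {st. \<alpha> \<le> \<sigma> * snd st a} = (\<integral>\<^sup>+st. indicator {st. \<alpha> \<le> \<sigma> * snd st a} st \<partial>M)"
    by (simp add: M_def)
  also have "\<dots> \<le> (\<integral>\<^sup>+st. ennreal (exp (inner_m m s (snd st))) * ennreal (exp (- l * \<alpha>)) \<partial>M)"
  proof (rule nn_integral_mono)
    fix st :: "vec \<times> vec"
    show "indicator {st. \<alpha> \<le> \<sigma> * snd st a} st \<le> ennreal (exp (inner_m m s (snd st))) * ennreal (exp (- l * \<alpha>))"
    proof (cases "\<alpha> \<le> \<sigma> * snd st a")
      case True
      have "l * \<alpha> \<le> l * (\<sigma> * snd st a)" using True l by (intro mult_left_mono) auto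
      hence "1 \<le> exp (inner_m m s (snd st)) * exp (- l * \<alpha>)"
        by (simp add: inner_s exp_add[symmetric] mult_ac)
      thus ?thesis using True by (simp add: ennreal_mult'[symmetric])
    qed simp
  qed
  also have "\<dots> = (\<integral>\<^sup>+st. ennreal (exp (inner_m m s (snd st))) \<partial>M) * ennreal (exp (- l * \<alpha>))"
    by (rule nn_integral_multc) (simp add: M_def)
  also have "\<dots> \<le> ennreal (exp (K * (norm_m m s)^2/2)) * ennreal (exp (- l * \<alpha>))"
    unfolding M_def using assms by (intro mult_right_mono phase2_state_mgf_le) auto
  also have "\<dots> = ennreal (exp (-(\<alpha>^2)/(2*K)))"
  proof -
    have "K * (norm_m m s)^2/2 + - l * \<alpha> = -(\<alpha>^2)/(2*K)"
      unfolding norm_s l_def using assms(2) by (simp add: field_simps power2_eq_square)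
    thus ?thesis by (simp add: ennreal_mult'[symmetric] exp_add[symmetric])
  qed
  finally show ?thesis unfolding M_def by (simp add: measure_pmf.emeasure_eq_measure)
qed

lemma phase2_state_tail:
  fixes \<delta> K \<alpha> :: real
  assumes "\<delta> > 0" "K > 0" "\<alpha> \<ge> 0" "a < m"
    and "\<forall>t<n. norm_m m (col Yt t) \<noteq> 0" "\<forall>t<n. \<delta>^2 * (norm_m m (col Yt t))^2/4 \<le> K"
  shows "measure_pmf.prob (phase2_state \<delta> w Yt m n) {st. \<alpha> < \<bar>snd st a\<bar>} \<le> 2 * exp (-(\<alpha>^2)/(2*K))"
proof -
  let ?P = "measure_pmf.prob (phase2_state \<delta> w Yt m n)"
  have "?P {st. \<alpha> < \<bar>snd st a\<bar>} \<le> ?P ({st. \<alpha> \<le> 1 * snd st a} \<union> {st. \<alpha> \<le> (-1) * snd st a})"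
    by (intro measure_pmf.finite_measure_mono) auto
  also have "\<dots> \<le> ?P {st. \<alpha> \<le> 1 * snd st a} + ?P {st. \<alpha> \<le> (-1) * snd st a}"
    by (rule measure_Un_le) auto
  also have "\<dots> \<le> exp (-(\<alpha>^2)/(2*K)) + exp (-(\<alpha>^2)/(2*K))"
    by (intro add_mono phase2_state_tail_one_sided[OF assms(1-4) _ assms(5,6)]) auto
  finally show ?thesis by simp
qed

lemma phase2_error_tail:
  fixes \<delta> K \<alpha> E :: real and V wt :: vec
  assumes "\<delta> > 0" "K > 0" "\<alpha> \<ge> 0"
    and "\<forall>t<n. norm_m m (col Yt t) \<noteq> 0" "\<forall>t<n. \<delta>^2 * (norm_m m (col Yt t))^2/4 \<le> K"
    and VE: "norm_m m (\<lambda>a. V a - matvec Yt wt n a) \<le> E"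
  shows "measure_pmf.prob (phase2 \<delta> wt Yt m n)
           {q. \<not> norm_m m (\<lambda>a. V a - matvec Yt q n a) \<le> E + sqrt (real m) * \<alpha>}
         \<le> real m * (2 * exp (-(\<alpha>^2)/(2*K)))"
proof -
  let ?S = "phase2_state \<delta> wt Yt m n"
  let ?A = "fst -` {q. \<not> norm_m m (\<lambda>a. V a - matvec Yt q n a) \<le> E + sqrt (real m) * \<alpha>}"
  have bad_event: "?A \<inter> set_pmf ?S \<subseteq> (\<Union>a\<in>{..<m}. {st. \<alpha> < \<bar>snd st a\<bar>})"
  proof (rule subsetI, rule ccontr)
    fix st assume st: "st \<in> ?A \<inter> set_pmf ?S" and "st \<notin> (\<Union>a\<in>{..<m}. {st. \<alpha> < \<bar>snd st a\<bar>})"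
    hence small: "\<forall>a<m. \<bar>snd st a\<bar> \<le> \<alpha>" by (auto simp: not_less)
    from st have st_S: "st \<in> set_pmf ?S" by blast
    have "norm_m m (\<lambda>a. V a - matvec Yt (fst st) n a)
        = norm_m m (\<lambda>a. (V a - matvec Yt wt n a) + snd st a)"
    proof (rule norm_m_cong)
      fix a
      have "snd st a = matvec Yt wt n a - matvec Yt (fst st) n a"
        using phase2_state_residual[OF st_S, of a] unfolding matvec_def
        by (simp add: sum_subtractf algebra_simps)
      thus "V a - matvec Yt (fst st) n a = (V a - matvec Yt wt n a) + snd st a" by simp
    qed
    also have "\<dots> \<le> norm_m m (\<lambda>a. V a - matvec Yt wt n a) + norm_m m (snd st)"
      by (rule norm_m_triangle)
    also have "\<dots> \<le> E + sqrt (real m) * \<alpha>"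
      using VE norm_m_le_sqrt_mult[of m "snd st" \<alpha>] small assms(3) by (intro add_mono) auto
    finally show False using st by simp
  qed
  have "measure_pmf.prob (phase2 \<delta> wt Yt m n)
           {q. \<not> norm_m m (\<lambda>a. V a - matvec Yt q n a) \<le> E + sqrt (real m) * \<alpha>}
        = measure_pmf.prob ?S (?A \<inter> set_pmf ?S)"
    unfolding phase2_def measure_map_pmf measure_Int_set_pmf ..
  also have "\<dots> \<le> measure_pmf.prob ?S (\<Union>a\<in>{..<m}. {st. \<alpha> < \<bar>snd st a\<bar>})"
    using bad_event by (rule measure_pmf.finite_measure_mono) simp
  also have "\<dots> \<le> (\<Sum>a<m. measure_pmf.prob ?S {st. \<alpha> < \<bar>snd st a\<bar>})"
    by (rule measure_UNION_le) auto
  also have "\<dots> \<le> (\<Sum>a<m. 2 * exp (-(\<alpha>^2)/(2*K)))"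
    by (intro sum_mono phase2_state_tail[OF assms(1-3) _ assms(4,5)]) auto
  finally show ?thesis by simp
qed

section \<open>Independent columns\<close>

lemma cols_pmf_union_bound:
  "emeasure (measure_pmf (cols_pmf f n)) {C. \<exists>j<n. C j \<in> B j}
     \<le> (\<Sum>j<n. emeasure (measure_pmf (f j)) (B j))"
proof (induction n)
  case (Suc n)
  let ?E = "{C. \<exists>j<n. C j \<in> B j}"
  let ?E' = "{C. \<exists>j<Suc n. C j \<in> B j}"
  have "emeasure (measure_pmf (cols_pmf f (Suc n))) ?E'
      = (\<integral>\<^sup>+C. (\<integral>\<^sup>+c. indicator ?E' (C(n := c)) \<partial>measure_pmf (f n)) \<partial>measure_pmf (cols_pmf f n))"
    by (simp flip: nn_integral_indicator)
  also have "\<dots> \<le> (\<integral>\<^sup>+C. (\<integral>\<^sup>+c. indicator ?E C + indicator (B n) c \<partial>measure_pmf (f n)) \<partial>measure_pmf (cols_pmf f n))"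
  proof (intro nn_integral_mono)
    fix C c
    have "C(n := c) \<in> ?E' \<Longrightarrow> C \<in> ?E \<or> c \<in> B n"
      by (auto simp: less_Suc_eq split: if_splits)
    thus "indicator ?E' (C(n := c)) \<le> (indicator ?E C + indicator (B n) c :: ennreal)"
      by (auto simp: indicator_def)
  qed
  also have "\<dots> = emeasure (measure_pmf (cols_pmf f n)) ?E + emeasure (measure_pmf (f n)) (B n)"
    by (simp add: nn_integral_add measure_pmf.emeasure_space_1)
  also have "\<dots> \<le> (\<Sum>j<n. emeasure (measure_pmf (f j)) (B j)) + emeasure (measure_pmf (f n)) (B n)"
    using Suc.IH by (rule add_right_mono)
  finally show ?case by simp
qed simp

lemma mat_pmf_union_bound:
  "measure_pmf.prob (mat_pmf f n) {Q. \<exists>j<n. col Q j \<in> B j} \<le> (\<Sum>j<n. measure_pmf.prob (f j) (B j))"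
proof -
  have "(\<lambda>C k j. C j k) -` {Q. \<exists>j<n. col Q j \<in> B j} = {C. \<exists>j<n. C j \<in> B j}"
    by (auto simp: col_def)
  hence "ennreal (measure_pmf.prob (mat_pmf f n) {Q. \<exists>j<n. col Q j \<in> B j})
       = emeasure (measure_pmf (cols_pmf f n)) {C. \<exists>j<n. C j \<in> B j}"
    unfolding mat_pmf_def by (simp add: measure_pmf.emeasure_eq_measure[symmetric])
  also have "\<dots> \<le> (\<Sum>j<n. emeasure (measure_pmf (f j)) (B j))" by (rule cols_pmf_union_bound)
  also have "\<dots> = ennreal (\<Sum>j<n. measure_pmf.prob (f j) (B j))"
    by (simp add: measure_pmf.emeasure_eq_measure)
  finally show ?thesis by (simp add: ennreal_le_iff sum_nonneg)
qed

section \<open>Order-\<open>r\<close> alignment\<close>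

lemma sum_fun_upd_lessThan:
  fixes h :: "real \<Rightarrow> nat \<Rightarrow> real"
  assumes "s < n"
  shows "(\<Sum>k<n. h ((f(s := c)) k) k) = (\<Sum>k<n. h (f k) k) - h (f s) s + h c s"
proof -
  have s: "s \<in> {..<n}" using assms by simp
  have "(\<Sum>k<n. h ((f(s := c)) k) k) = h c s + (\<Sum>k\<in>{..<n}-{s}. h (f k) k)"
    using sum.remove[OF finite_lessThan s, of "\<lambda>k. h ((f(s := c)) k) k"] by simp
  also have "(\<Sum>k\<in>{..<n}-{s}. h (f k) k) = (\<Sum>k<n. h (f k) k) - h (f s) s"
    using sum.remove[OF finite_lessThan s, of "\<lambda>k. h (f k) k"] by simp
  finally show ?thesis by simp
qed

lemma ord_state_residual:
  assumes "n > 0"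
  shows "snd (ord_state m n Y Yt w t) a
       = (\<Sum>k<min t n. w k * Y a k - fst (ord_state m n Y Yt w t) k * Yt a k)"
proof (induction t)
  case (Suc t)
  obtain wt u where st: "ord_state m n Y Yt w t = (wt, u)" by (cases "ord_state m n Y Yt w t")
  show ?case
  proof (cases "t < n")
    case True
    define c where "c = inner_m m (col Yt t) (\<lambda>a. u a + w t * Y a t) / (norm_m m (col Yt t))^2"
    have "ord_state m n Y Yt w (Suc t) = (wt(t := c), \<lambda>a. u a + w t * Y a t - c * Yt a t)"
      using True by (simp add: st ord_step_def Let_def c_def)
    moreover have "min (Suc t) n = Suc t" "min t n = t" using True by auto
    ultimately show ?thesis using Suc.IH by (simp add: st sum.lessThan_Suc)
  next
    case False
    define s where "s = t mod n"
    have s: "s < n" unfolding s_def using assms by simp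
    define v where "v = (\<lambda>a. u a - w s * Y a s + wt s * Yt a s)"
    define c where "c = inner_m m (col Yt s) (\<lambda>a. v a + w s * Y a s) / (norm_m m (col Yt s))^2"
    have "ord_state m n Y Yt w (Suc t) = (wt(s := c), \<lambda>a. v a + w s * Y a s - c * Yt a s)"
      using False by (simp add: st ord_step_def Let_def c_def v_def s_def)
    moreover have "min (Suc t) n = n" "min t n = n" using False by auto
    ultimately show ?thesis
      using Suc.IH sum_fun_upd_lessThan[OF s, of "\<lambda>x k. w k * Y a k - x * Yt a k" wt c]
      by (simp add: st v_def)
  qed
qed simp

text \<open>During the first pass each step removes from \<open>u + w\<^sub>t Y\<^sub>t\<close> its component along
  \<open>Yt\<^sub>t\<close>, which is the same as projecting \<open>u + w\<^sub>t (Y\<^sub>t - Yt\<^sub>t)\<close>; projections do not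
  increase the norm.\<close>

lemma ord_state_first_pass_norm:
  assumes "\<forall>t<n. norm_m m (col Yt t) \<noteq> 0"
  shows "t \<le> n \<Longrightarrow> norm_m m (snd (ord_state m n Y Yt w t))
           \<le> (\<Sum>k<t. \<bar>w k\<bar> * norm_m m (\<lambda>a. Y a k - Yt a k))"
proof (induction t)
  case 0
  thus ?case by (simp add: norm_m_def)
next
  case (Suc t)
  hence t: "t < n" by simp
  obtain wt u where st: "ord_state m n Y Yt w t = (wt, u)" by (cases "ord_state m n Y Yt w t")
  define y where "y = col Yt t"
  have y: "norm_m m y \<noteq> 0" using assms t y_def by simp
  define c where "c = inner_m m y (\<lambda>a. u a + w t * Y a t) / (norm_m m y)^2"
  have step: "snd (ord_state m n Y Yt w (Suc t)) = (\<lambda>a. u a + w t * Y a t - c * y a)"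
    using t by (simp add: st ord_step_def Let_def c_def y_def col_def)
  define z where "z = (\<lambda>a. u a + w t * (Y a t - Yt a t))"
  have "inner_m m z y = inner_m m y (\<lambda>a. u a + w t * Y a t) - w t * (norm_m m y)^2"
    unfolding inner_m_def z_def power2_norm_m y_def col_def
    by (simp add: algebra_simps sum.distrib sum_subtractf sum_distrib_left power2_eq_square)
  hence "inner_m m z y / (norm_m m y)^2 = c - w t"
    using y by (simp add: c_def field_simps)
  hence "snd (ord_state m n Y Yt w (Suc t)) = (\<lambda>a. z a - inner_m m z y * y a / (norm_m m y)^2)"
    by (simp only: step times_divide_eq_right[symmetric] mult.commute[of _ "y _"])
       (simp add: z_def y_def col_def algebra_simps)
  hence "norm_m m (snd (ord_state m n Y Yt w (Suc t))) \<le> norm_m m z"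
    using norm_m_reject_le[OF y] by simp
  also have "\<dots> \<le> norm_m m u + \<bar>w t\<bar> * norm_m m (\<lambda>a. Y a t - Yt a t)"
    unfolding z_def using norm_m_triangle norm_m_scale by metis
  also have "\<dots> \<le> (\<Sum>k<Suc t. \<bar>w k\<bar> * norm_m m (\<lambda>a. Y a k - Yt a k))"
    using Suc.IH Suc.prems st by simp
  finally show ?case .
qed

text \<open>In later passes the entry \<open>wt\<^sub>s\<close> is re-optimised, so the residual is simply
  projected onto the orthogonal complement of \<open>Yt\<^sub>s\<close>.\<close>

lemma ord_state_Suc_later:
  assumes "\<forall>t<n. norm_m m (col Yt t) \<noteq> 0" and "0 < n" "n \<le> t"
  defines "s \<equiv> t mod n"
  shows "snd (ord_state m n Y Yt w (Suc t)) a = snd (ord_state m n Y Yt w t) a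
     - inner_m m (col Yt s) (snd (ord_state m n Y Yt w t)) / (norm_m m (col Yt s))^2 * Yt a s"
proof -
  obtain wt u where st: "ord_state m n Y Yt w t = (wt, u)" by (cases "ord_state m n Y Yt w t")
  have "s < n" unfolding s_def using assms by simp
  hence y: "(norm_m m (col Yt s))^2 \<noteq> 0" using assms(1) by simp
  define v where "v = (\<lambda>a. u a - w s * Y a s + wt s * Yt a s)"
  have "inner_m m (col Yt s) (\<lambda>a. v a + w s * Y a s)
      = inner_m m (col Yt s) u + wt s * (norm_m m (col Yt s))^2"
    unfolding inner_m_def v_def power2_norm_m col_def
    by (simp add: algebra_simps sum.distrib sum_distrib_left power2_eq_square)
  thus ?thesis
    using assms(3) y by (simp add: st ord_step_def Let_def v_def s_def[symmetric] col_def field_simps)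
qed

lemma ord_state_pass:
  assumes "\<forall>t<n. norm_m m (col Yt t) \<noteq> 0" and "k \<ge> 1"
  shows "j \<le> n \<Longrightarrow> a < m \<Longrightarrow> snd (ord_state m n Y Yt w (k*n + j)) a
             = matvec (proj_prod m Yt j) (snd (ord_state m n Y Yt w (k*n))) m a"
proof (induction j arbitrary: a)
  case 0
  thus ?case by (simp add: matvec_idm)
next
  case (Suc j)
  let ?u = "snd (ord_state m n Y Yt w (k*n + j))"
  let ?v = "snd (ord_state m n Y Yt w (k*n))"
  have j: "j < n" using Suc.prems by simp
  have "n \<le> k*n + j" using assms(2) by (metis le_add1 mult_le_mono1 mult_1 order_trans)
  hence "snd (ord_state m n Y Yt w (k*n + Suc j)) a
      = ?u a - inner_m m (col Yt j) ?u / (norm_m m (col Yt j))^2 * Yt a j"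
    using ord_state_Suc_later[OF assms(1), of "k*n + j"] j by simp
  also have "\<dots> = matvec (proj_prod m Yt j) ?v m a
      - inner_m m (col Yt j) (\<lambda>b. matvec (proj_prod m Yt j) ?v m b) / (norm_m m (col Yt j))^2 * Yt a j"
    using Suc.IH j Suc.prems(2) by (simp cong: inner_m_cong)
  also have "\<dots> = matvec (proj_prod m Yt (Suc j)) ?v m a"
    using Suc.prems(2) by (simp add: matvec_matmul matvec_proj_perp col_def)
  finally show ?case .
qed

lemma ord_state_norm_later_passes:
  assumes "\<forall>t<n. norm_m m (col Yt t) \<noteq> 0"
  shows "k \<ge> 1 \<Longrightarrow> norm_m m (snd (ord_state m n Y Yt w (k*n)))
     \<le> op_norm m (proj_prod m Yt n) ^ (k - 1) * norm_m m (snd (ord_state m n Y Yt w n))"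
proof (induction k)
  case (Suc k)
  let ?op = "op_norm m (proj_prod m Yt n)"
  show ?case
  proof (cases "k = 0")
    case False
    have "norm_m m (snd (ord_state m n Y Yt w (Suc k * n)))
        = norm_m m (matvec (proj_prod m Yt n) (snd (ord_state m n Y Yt w (k*n))) m)"
      using ord_state_pass[OF assms, of k n] False by (intro norm_m_cong) (simp add: add.commute)
    also have "\<dots> \<le> ?op * norm_m m (snd (ord_state m n Y Yt w (k*n)))"
      by (rule norm_matvec_le_op_norm)
    also have "\<dots> \<le> ?op * (?op ^ (k - 1) * norm_m m (snd (ord_state m n Y Yt w n)))"
      using Suc.IH False op_norm_nonneg by (intro mult_left_mono) auto
    also have "\<dots> = ?op ^ (Suc k - 1) * norm_m m (snd (ord_state m n Y Yt w n))"
      using False by (cases k) auto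
    finally show ?thesis .
  qed simp
qed simp

lemma order_r_align_error:
  assumes "\<forall>t<n. norm_m m (col Yt t) \<noteq> 0" and "r \<ge> 1"
    and "\<forall>k<n. \<bar>w k\<bar> \<le> \<mu>" and "\<forall>k<n. norm_m m (\<lambda>a. Y a k - Yt a k) \<le> D"
  shows "norm_m m (\<lambda>a. matvec Y w n a - matvec Yt (order_r_align r m n Y Yt w) n a)
     \<le> real n * \<mu> * op_norm m (proj_prod m Yt n) ^ (r - 1) * D"
proof (cases "n = 0")
  case True
  thus ?thesis by (simp add: matvec_def norm_m_def)
next
  case False
  let ?op = "op_norm m (proj_prod m Yt n)"
  have "norm_m m (\<lambda>a. matvec Y w n a - matvec Yt (order_r_align r m n Y Yt w) n a)
      = norm_m m (snd (ord_state m n Y Yt w (r*n)))"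
    using False assms(2)
    by (intro norm_m_cong) (simp add: ord_state_residual order_r_align_def matvec_def sum_subtractf mult.commute)
  also have "\<dots> \<le> ?op ^ (r - 1) * norm_m m (snd (ord_state m n Y Yt w n))"
    by (rule ord_state_norm_later_passes[OF assms(1,2)])
  also have "\<dots> \<le> ?op ^ (r - 1) * (real n * \<mu> * D)"
  proof (intro mult_left_mono)
    have "0 \<le> \<mu>" using assms(3) False by (meson abs_ge_zero order_trans neq0_conv)
    have "norm_m m (snd (ord_state m n Y Yt w n)) \<le> (\<Sum>k<n. \<bar>w k\<bar> * norm_m m (\<lambda>a. Y a k - Yt a k))"
      by (rule ord_state_first_pass_norm[OF assms(1) order_refl])
    also have "\<dots> \<le> (\<Sum>k<n. \<mu> * D)"
      using assms(3,4) \<open>0 \<le> \<mu>\<close> by (intro sum_mono mult_mono) (auto simp: norm_m_nonneg)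
    finally show "norm_m m (snd (ord_state m n Y Yt w n)) \<le> real n * \<mu> * D"
      by (simp add: mult.assoc)
  qed (simp add: op_norm_nonneg)
  finally show ?thesis by (simp add: mult_ac)
qed

section \<open>Error bound for one layer\<close>

lemma two_exp_le_sqrt2_div_power:
  assumes "real n ^ p \<ge> 2"
  shows "2 * exp (- (4 * pi * real p * ln (real n))) \<le> sqrt 2 / real n ^ p"
proof -
  define x where "x = real n ^ p"
  have x: "x \<ge> 2" unfolding x_def using assms .
  have "n \<noteq> 0" using assms by (rule contrapos_pn) (cases p, auto)
  hence "exp (real p * ln (real n)) = x" unfolding x_def by (simp add: exp_of_nat_mult)
  hence "exp (4 * (real p * ln (real n))) = x^4" by (metis exp_of_nat_mult of_nat_numeral)
  moreover have "4 * (real p * ln (real n)) \<le> (4 * pi) * (real p * ln (real n))"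
    using pi_gt3 \<open>n \<noteq> 0\<close> by (intro mult_right_mono) auto
  ultimately have "x^4 \<le> exp (4 * pi * real p * ln (real n))"
    by (metis exp_le_cancel_iff mult.assoc)
  moreover have "8 * x \<le> x^4"
  proof -
    have "(2::real)^3 \<le> x^3" using x by (intro power_mono) auto
    thus ?thesis using x by (simp add: power_Suc2[symmetric] numeral_eq_Suc mult_right_mono)
  qed
  ultimately have "8 * x \<le> exp (4 * pi * real p * ln (real n))" by linarith
  hence "2 * exp (- (4 * pi * real p * ln (real n))) \<le> 2 / (8 * x)"
    using x by (simp add: exp_minus field_simps)
  also have "\<dots> = (1/4) / x" by simp
  also have "\<dots> \<le> sqrt 2 / x"
  proof (rule divide_right_mono)
    have "(1::real) \<le> sqrt 2" by simp
    thus "1/4 \<le> sqrt (2::real)" by linarith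
  qed (use x in simp)
  finally show ?thesis unfolding x_def .
qed

text \<open>The bad-event probability is bounded by \<open>1\<close> as well as by the union bound; the
  first bound covers the degenerate cases \<open>n\<^sup>p = 1\<close>, where the Chernoff estimate is useless.\<close>

lemma min_one_union_bound_le:
  fixes n p k :: nat
  assumes "n \<ge> 1"
  shows "min 1 (real k * (2 * exp (- (4 * pi * real p * ln (real n))))) \<le> sqrt 2 * real k / real n ^ p"
proof (cases "real n ^ p \<ge> 2")
  case True
  thus ?thesis
    using mult_left_mono[OF two_exp_le_sqrt2_div_power[OF True], of "real k"]
    by (simp add: min_le_iff_disj ac_simps)
next
  case False
  have "n ^ p < 2" using False by (metis not_le of_nat_le_iff of_nat_numeral of_nat_power)
  moreover have "n ^ p \<ge> 1" using assms by simp
  ultimately have "n ^ p = 1" by linarith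
  hence "real n ^ p = 1" by (metis of_nat_1 of_nat_power)
  thus ?thesis by (cases "k = 0") (auto simp: min_le_iff_disj intro: order_trans[of _ "real k"])
qed

lemma phase2_columns_error_bound:
  fixes \<delta> :: real and m n Ni p :: nat and Yt :: mat and V wt :: "nat \<Rightarrow> vec" and E :: "nat \<Rightarrow> real"
  assumes "\<delta> > 0" and nz: "\<forall>t<n. norm_m m (col Yt t) \<noteq> 0"
    and VE: "\<forall>j<Ni. norm_m m (\<lambda>a. V j a - matvec Yt (wt j) n a) \<le> E j"
  defines "Mt \<equiv> (MAX t\<in>{..<n}. norm_m m (col Yt t))"
  shows "measure_pmf.prob (mat_pmf (\<lambda>j. phase2 \<delta> (wt j) Yt m n) Ni)
     {Q. \<forall>j<Ni. norm_m m (\<lambda>a. V j a - matvec Yt (col Q j) n a)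
           \<le> E j + \<delta> * sqrt (2 * pi * real p * real m * ln (real n)) * Mt}
     \<ge> 1 - sqrt 2 * real m * real Ni / real n ^ p"
proof -
  let ?P = "mat_pmf (\<lambda>j. phase2 \<delta> (wt j) Yt m n) Ni"
  let ?G = "{Q. \<forall>j<Ni. norm_m m (\<lambda>a. V j a - matvec Yt (col Q j) n a)
           \<le> E j + \<delta> * sqrt (2 * pi * real p * real m * ln (real n)) * Mt}"
  show ?thesis
  proof (cases "n = 0")
    case True
    hence "?G = UNIV" using VE by (simp add: matvec_def)
    thus ?thesis by simp
  next
    case False
    have Mt_ge: "norm_m m (col Yt t) \<le> Mt" if "t < n" for t
      unfolding Mt_def using that by (intro Max_ge) auto
    have "norm_m m (col Yt 0) > 0" using nz False norm_m_nonneg[of m "col Yt 0"] by force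
    hence Mt: "Mt > 0" using Mt_ge[of 0] False by linarith
    define K where "K = \<delta>^2 * Mt^2 / 4"
    define \<alpha> where "\<alpha> = \<delta> * sqrt (2 * pi * real p * ln (real n)) * Mt"
    have K: "K > 0" unfolding K_def using assms(1) Mt by simp
    have \<alpha>: "\<alpha> \<ge> 0" unfolding \<alpha>_def using assms(1) Mt False by simp
    have Kt: "\<forall>t<n. \<delta>^2 * (norm_m m (col Yt t))^2/4 \<le> K"
      unfolding K_def using Mt_ge norm_m_nonneg
      by (auto intro!: divide_right_mono mult_left_mono power_mono)
    have threshold: "\<delta> * sqrt (2 * pi * real p * real m * ln (real n)) * Mt = sqrt (real m) * \<alpha>"
      unfolding \<alpha>_def by (simp add: real_sqrt_mult[symmetric] mult_ac)
    have exponent: "\<alpha>^2 / (2*K) = 4 * pi * real p * ln (real n)"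
      unfolding \<alpha>_def K_def using assms(1) Mt False by (simp add: power_mult_distrib field_simps)
    define B where "B = (\<lambda>j. {q. \<not> norm_m m (\<lambda>a. V j a - matvec Yt q n a) \<le> E j + sqrt (real m) * \<alpha>})"
    have "UNIV - ?G = {Q. \<exists>j<Ni. col Q j \<in> B j}"
      unfolding B_def threshold by auto
    hence "measure_pmf.prob ?P (UNIV - ?G) \<le> (\<Sum>j<Ni. measure_pmf.prob (phase2 \<delta> (wt j) Yt m n) (B j))"
      by (simp only: mat_pmf_union_bound)
    also have "\<dots> \<le> (\<Sum>j<Ni. real m * (2 * exp (-(\<alpha>^2)/(2*K))))"
      unfolding B_def using VE by (intro sum_mono phase2_error_tail[OF assms(1) K \<alpha> nz Kt]) auto
    also have "\<dots> = real (m * Ni) * (2 * exp (- (4 * pi * real p * ln (real n))))"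
      using exponent by (simp add: minus_divide_left[symmetric])
    finally have "measure_pmf.prob ?P (UNIV - ?G)
        \<le> min 1 (real (m * Ni) * (2 * exp (- (4 * pi * real p * ln (real n)))))"
      by simp
    also have "\<dots> \<le> sqrt 2 * real (m * Ni) / real n ^ p"
      using False by (intro min_one_union_bound_le) simp
    finally show ?thesis
      using measure_pmf.prob_compl[of ?G ?P] by simp
  qed
qed

lemma relu_diff_power2_le: "(relu x - relu y)^2 \<le> (x - y)^2"
proof -
  have "\<bar>relu x - relu y\<bar> \<le> \<bar>x - y\<bar>" by (auto simp: relu_def max_def)
  thus ?thesis by (metis abs_ge_zero power2_abs power_mono)
qed

lemma net_col_diff_le_col_err:
  "norm_m m (\<lambda>a. net X W N (Suc k) a b - net X Q N (Suc k) a b)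
   \<le> col_err m (N k) (net X W N k) (W (Suc k)) (net X Q N k) (Q (Suc k)) b"
  unfolding col_err_def norm_m_def
proof (intro real_sqrt_le_mono sum_mono)
  fix a
  show "(net X W N (Suc k) a b - net X Q N (Suc k) a b)^2
     \<le> (matvec (net X W N k) (col (W (Suc k)) b) (N k) a - matvec (net X Q N k) (col (Q (Suc k)) b) (N k) a)^2"
    by (simp add: matvec_def col_def relu_diff_power2_le)
qed

lemma norm_net_col_le:
  "norm_m m (col (net X Q N (Suc k)) b)
   \<le> norm_m m (col (net X W N (Suc k)) b) + col_err m (N k) (net X W N k) (W (Suc k)) (net X Q N k) (Q (Suc k)) b"
proof -
  have "norm_m m (col (net X Q N (Suc k)) b)
      = norm_m m (\<lambda>a. col (net X W N (Suc k)) b a + (net X Q N (Suc k) a b - net X W N (Suc k) a b))"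
    by (simp add: col_def del: net.simps)
  also have "\<dots> \<le> norm_m m (col (net X W N (Suc k)) b) + norm_m m (\<lambda>a. net X Q N (Suc k) a b - net X W N (Suc k) a b)"
    by (rule norm_m_triangle)
  also have "norm_m m (\<lambda>a. net X Q N (Suc k) a b - net X W N (Suc k) a b)
      = norm_m m (\<lambda>a. net X W N (Suc k) a b - net X Q N (Suc k) a b)"
    by (rule norm_m_minus_commute)
  finally show ?thesis using net_col_diff_le_col_err[of m X W N k b Q] by linarith
qed

lemma Max_le_Max_add_Max:
  fixes f g h :: "nat \<Rightarrow> real"
  assumes "n > 0" "\<And>t. t < n \<Longrightarrow> f t \<le> g t + h t"
  shows "(MAX t\<in>{..<n}. f t) \<le> (MAX t\<in>{..<n}. g t) + (MAX t\<in>{..<n}. h t)"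
proof -
  have "f t \<le> (MAX t\<in>{..<n}. g t) + (MAX t\<in>{..<n}. h t)" if "t < n" for t
  proof -
    have "g t \<le> (MAX t\<in>{..<n}. g t)" "h t \<le> (MAX t\<in>{..<n}. h t)"
      using that by (intro Max_ge; simp)+
    thus ?thesis using assms(2)[OF that] by linarith
  qed
  thus ?thesis using assms(1) by (subst Max_le_iff) auto
qed

lemma quantized_layer_error_bound:
  fixes X :: mat and W Q :: "nat \<Rightarrow> mat" and N :: "nat \<Rightarrow> nat" and wt :: "nat \<Rightarrow> vec"
    and i m p :: nat and \<delta> A :: real
  defines "c \<equiv> \<delta> * sqrt (2 * pi * real p * real m * ln (real (N (i-1))))"
    and "M2 \<equiv> MAX j\<in>{..<N (i-1)}. col_err m (N (i-2)) (net X W N (i-2)) (W (i-1)) (net X Q N (i-2)) (Q (i-1)) j"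
  assumes "\<delta> > 0" and "2 \<le> i" and nz: "\<forall>t<N (i-1). norm_m m (col (net X Q N (i-1)) t) \<noteq> 0"
    and aligned: "\<forall>j<N i. norm_m m (\<lambda>a. matvec (net X W N (i-1)) (col (W i) j) (N (i-1)) a
                                   - matvec (net X Q N (i-1)) (wt j) (N (i-1)) a) \<le> A * M2"
  shows "measure_pmf.prob (mat_pmf (\<lambda>j. phase2 \<delta> (wt j) (net X Q N (i-1)) m (N (i-1))) (N i))
        {Qi. \<forall>j<N i. col_err m (N (i-1)) (net X W N (i-1)) (W i) (net X Q N (i-1)) Qi j
           \<le> c * (MAX j\<in>{..<N (i-1)}. norm_m m (col (net X W N (i-1)) j)) + (A + c) * M2}
      \<ge> 1 - sqrt 2 * real m * real (N i) / real (N (i-1)) ^ p"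
proof -
  obtain k where "i = Suc (Suc k)" using \<open>2 \<le> i\<close> by (metis add_2_eq_Suc le_Suc_ex)
  hence i1: "i - 1 = Suc k" and i2: "i - 2 = k" by simp_all
  let ?Mt = "MAX t\<in>{..<N (i-1)}. norm_m m (col (net X Q N (i-1)) t)"
  let ?M1 = "MAX j\<in>{..<N (i-1)}. norm_m m (col (net X W N (i-1)) j)"
  have "c * ?Mt \<le> c * ?M1 + c * M2"
  proof (cases "N (i-1) = 0")
    case False
    have "?Mt \<le> ?M1 + M2"
      unfolding M2_def i1 i2
    proof (rule Max_le_Max_add_Max)
      show "0 < N (Suc k)" using False i1 by simp
    qed (rule norm_net_col_le)
    moreover have "c \<ge> 0" unfolding c_def using \<open>\<delta> > 0\<close> False by simp
    ultimately show ?thesis by (simp add: distrib_left[symmetric] mult_left_mono)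
  qed (simp add: c_def)
  hence events: "{Qi. \<forall>j<N i. norm_m m (\<lambda>a. matvec (net X W N (i-1)) (col (W i) j) (N (i-1)) a
                         - matvec (net X Q N (i-1)) (col Qi j) (N (i-1)) a) \<le> A * M2 + c * ?Mt}
      \<subseteq> {Qi. \<forall>j<N i. col_err m (N (i-1)) (net X W N (i-1)) (W i) (net X Q N (i-1)) Qi j
           \<le> c * ?M1 + (A + c) * M2}"
    by (auto simp: col_err_def distrib_right)
  show ?thesis
    by (rule order_trans[OF phase2_columns_error_bound[OF \<open>\<delta> > 0\<close> nz aligned, of p, folded c_def]
          measure_pmf.finite_measure_mono[OF events]]) simp
qed

lemma perfect_align_residual:
  assumes "perfect_align m n Y Yt w z"
  shows "norm_m m (\<lambda>a. matvec Y w n a - matvec Yt z n a) = 0"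
proof -
  have "norm_m m (\<lambda>a. matvec Y w n a - matvec Yt z n a) = norm_m m (\<lambda>_. 0)"
    using assms unfolding perfect_align_def by (intro norm_m_cong) simp
  thus ?thesis by (simp add: norm_m_def)
qed

lemma order_r_align_layer_error:
  assumes "1 \<le> r" and "2 \<le> i" and nz: "\<forall>t<N (i-1). norm_m m (col (net X Q N (i-1)) t) \<noteq> 0"
  shows "\<forall>j<N i. norm_m m (\<lambda>a. matvec (net X W N (i-1)) (col (W i) j) (N (i-1)) a
          - matvec (net X Q N (i-1))
              (order_r_align r m (N (i-1)) (net X W N (i-1)) (net X Q N (i-1)) (col (W i) j)) (N (i-1)) a)
      \<le> (real (N (i-1)) * max_norm (N (i-1)) (N i) (W i)
           * op_norm m (proj_prod m (net X Q N (i-1)) (N (i-1))) ^ (r - 1))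
        * (MAX j\<in>{..<N (i-1)}. col_err m (N (i-2)) (net X W N (i-2)) (W (i-1)) (net X Q N (i-2)) (Q (i-1)) j)"
    (is "\<forall>j<N i. ?err j \<le> ?A * ?M2")
proof (intro allI impI)
  fix j assume j: "j < N i"
  obtain k where "i = Suc (Suc k)" using \<open>2 \<le> i\<close> by (metis add_2_eq_Suc le_Suc_ex)
  hence i1: "i - 1 = Suc k" and i2: "i - 2 = k" by simp_all
  have entries: "\<forall>t<N (i-1). \<bar>col (W i) j t\<bar> \<le> max_norm (N (i-1)) (N i) (W i)"
    unfolding max_norm_def col_def using j by (auto intro!: Max_ge rev_image_eqI)
  have columns: "\<forall>t<N (i-1). norm_m m (\<lambda>a. net X W N (i-1) a t - net X Q N (i-1) a t) \<le> ?M2"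
  proof (intro allI impI)
    fix t assume "t < N (i-1)"
    have "norm_m m (\<lambda>a. net X W N (i-1) a t - net X Q N (i-1) a t)
        \<le> col_err m (N (i-2)) (net X W N (i-2)) (W (i-1)) (net X Q N (i-2)) (Q (i-1)) t"
      unfolding i1 i2 by (rule net_col_diff_le_col_err)
    also have "\<dots> \<le> ?M2" using \<open>t < N (i-1)\<close> by (intro Max_ge) auto
    finally show "norm_m m (\<lambda>a. net X W N (i-1) a t - net X Q N (i-1) a t) \<le> ?M2" .
  qed
  show "?err j \<le> ?A * ?M2"
    by (rule order_r_align_error[OF nz \<open>1 \<le> r\<close> entries columns])
qed

theorem mainTheorem4:
  fixes X :: mat and W :: "nat \<Rightarrow> mat" and N :: "nat \<Rightarrow> nat"
    and m L i p r :: nat and \<delta> :: real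
  assumes "\<delta> > 0" and "2 \<le> i" and "i \<le> L"
  defines "c \<equiv> \<delta> * sqrt (2 * pi * real p * real m * ln (real (N (i-1))))"
  shows
   "(\<forall>Q wt.
      (\<forall>k\<in>{1..i}. \<forall>j<N (k-1). norm_m m (col (net X Q N (k-1)) j) \<noteq> 0) \<longrightarrow>
      (\<forall>k\<in>{1..i-1}. \<forall>j<N k. \<exists>z.
          perfect_align m (N (k-1)) (net X W N (k-1)) (net X Q N (k-1)) (col (W k) j) z \<and>
          col (Q k) j \<in> set_pmf (phase2 \<delta> z (net X Q N (k-1)) m (N (k-1)))) \<longrightarrow>
      (\<forall>j<N i. perfect_align m (N (i-1)) (net X W N (i-1)) (net X Q N (i-1)) (col (W i) j) (wt j)) \<longrightarrow>
      measure_pmf.prob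
        (mat_pmf (\<lambda>j. phase2 \<delta> (wt j) (net X Q N (i-1)) m (N (i-1))) (N i))
        {Qi. \<forall>j<N i.
           col_err m (N (i-1)) (net X W N (i-1)) (W i) (net X Q N (i-1)) Qi j
           \<le> c * (MAX j\<in>{..<N (i-1)}. norm_m m (col (net X W N (i-1)) j))
             + c * (MAX j\<in>{..<N (i-1)}.
                      col_err m (N (i-2)) (net X W N (i-2)) (W (i-1)) (net X Q N (i-2)) (Q (i-1)) j)}
      \<ge> 1 - sqrt 2 * real m * real (N i) / real (N (i-1)) ^ p)
    \<and>
    (1 \<le> r \<longrightarrow> (\<forall>Q.
      (\<forall>k\<in>{1..i}. \<forall>j<N (k-1). norm_m m (col (net X Q N (k-1)) j) \<noteq> 0) \<longrightarrow>
      (\<forall>k\<in>{1..i-1}. \<forall>j<N k.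
          col (Q k) j \<in> set_pmf (phase2 \<delta>
             (order_r_align r m (N (k-1)) (net X W N (k-1)) (net X Q N (k-1)) (col (W k) j))
             (net X Q N (k-1)) m (N (k-1)))) \<longrightarrow>
      measure_pmf.prob
        (mat_pmf (\<lambda>j. phase2 \<delta>
             (order_r_align r m (N (i-1)) (net X W N (i-1)) (net X Q N (i-1)) (col (W i) j))
             (net X Q N (i-1)) m (N (i-1))) (N i))
        {Qi. \<forall>j<N i.
           col_err m (N (i-1)) (net X W N (i-1)) (W i) (net X Q N (i-1)) Qi j
           \<le> c * (MAX j\<in>{..<N (i-1)}. norm_m m (col (net X W N (i-1)) j))
             + (real (N (i-1)) * max_norm (N (i-1)) (N i) (W i)
                  * op_norm m (proj_prod m (net X Q N (i-1)) (N (i-1))) ^ (r - 1) + c)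
               * (MAX j\<in>{..<N (i-1)}.
                      col_err m (N (i-2)) (net X W N (i-2)) (W (i-1)) (net X Q N (i-2)) (Q (i-1)) j)}
      \<ge> 1 - sqrt 2 * real m * real (N i) / real (N (i-1)) ^ p))"
proof -
  have nz: "\<forall>t<N (i-1). norm_m m (col (net X Q N (i-1)) t) \<noteq> 0"
    if "\<forall>k\<in>{1..i}. \<forall>j<N (k-1). norm_m m (col (net X Q N (k-1)) j) \<noteq> 0" for Q
    using that assms(2) by auto
  \<comment> \<open>How the earlier layers were quantized is irrelevant: the bound holds for every fixed \<open>Q\<close>.\<close>
  show ?thesis
    apply (intro conjI allI impI)
    subgoal premises prems for Q wt
      using quantized_layer_error_bound[OF assms(1,2) nz[OF prems(1)], where A = 0] prems(3)
      by (simp add: perfect_align_residual c_def)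
    subgoal premises prems for Q
      using quantized_layer_error_bound[OF assms(1,2) nz[OF prems(2)]
          order_r_align_layer_error[OF prems(1) assms(2) nz[OF prems(2)]]]
      unfolding c_def .
    done
qed

end
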